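(* Let $n_1,n_2\ge2$, $N=n_1n_2$, and let $\tau_1\neq\tau_2$ be real numbers such that $(\sqrt{\tau_1},\sqrt{\tau_2})$ is $(n_1,n_2)$-independent. Let $K=K(n_1,n_2,\tau_1,\tau_2)$, $Q=\begin{pmatrix}K&\mathcal I_N\\0&K\end{pmatrix}$ and $e_1=(1,0,\dots,0)\in\mathbb{R}^{2N}$ (row vector). Then: (i) If $N$ is even, then for every positive integer $s$ the vectors $e_1Q^s,e_1Q^{s+1},\dots,e_1Q^{s+2N-1}$ are linearly independent. (ii) If $N$ is odd, let $s\ge 2N$, $\Lambda=\{e_1Q^2,e_1Q^3,\dots,e_1Q^{2N-1}\}$, $\Lambda_s=\Lambda\cup\{e_1Q^s\}$, and let $\bar M(s)$ be the $(2N-1)\times 2N$ matrix whose rows are $e_1Q^2,\dots,e_1Q^{2N-1},e_1Q^s$ in this order, with columns $\bar{\mathfrak C}_1(s),\dots,\bar{\mathfrak C}_{2N}(s)$. Then (a) $\Lambda$ is linearly independent while $\Lambda_s$ is linearly dependent; (b) $\bar{\mathfrak C}_1(s)$ lies in the span of the odd columns $\bar{\mathfrak C}_3(s),\bar{\mathfrak C}_5(s),\dots,\bar{\mathfrak C}_{N}(s)$; (c) $\bar{\mathfrak C}_{N+1}(s)$ lies in the span of the columns $\bar{\mathfrak C}_{N+3}(s),\bar{\mathfrak C}_{N+5}(s),\dots,\bar{\mathfrak C}_{2N}(s)$.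
   Context: Modified Kac matrix: for $m\ge1$, $y\in\mathbb{R}$, $\mathcal K(m,y)=(k_{ij})_{1\le i,j\le m}$ with $k_{i,i-1}=(m-i+1)y$, $k_{i,i+1}=i$, other entries $0$. Modified Kac matrix of second type: $K(n_1,n_2,x,y)=\mathcal I_{n_1}\otimes\mathcal K(n_2,y)+\mathcal K(n_1,x)\otimes\mathcal I_{n_2}$, i.e. the matrix of $n_2\times n_2$ blocks with diagonal blocks $\mathcal K(n_2,y)$, subdiagonal blocks $K_{i,i-1}=(n_1-i+1)x\,\mathcal I_{n_2}$, superdiagonal blocks $K_{i,i+1}=i\,\mathcal I_{n_2}$. With $\mathcal N_i=\{n_i-1-2r: r=0,\dots,n_i-1\}$, a pair $(z_1,z_2)\in\mathbb{C}^2$ is $(n_1,n_2)$-independent if for all $a_i,b_i\in\mathcal N_i$, $(a_1-b_1)z_1+(a_2-b_2)z_2=0$ implies $a_1=b_1$ and $a_2=b_2$. *)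

theory Defs
  imports "Jordan_Normal_Form.VS_Connect" Complex_Main
begin

(* All matrices are Jordan_Normal_Form matrices, 0-indexed:
   paper entry (i,j) (1-indexed) is entry (i-1,j-1) here. *)

text \<open>Modified Kac matrix K(m,y): k_{i,i-1} = (m-i+1) y, k_{i,i+1} = i (1-indexed).\<close>
definition kac_mat :: "nat \<Rightarrow> real \<Rightarrow> real mat" where
  "kac_mat m y = mat m m (\<lambda>(i,j).
      if j + 1 = i then of_nat (m - i) * y
      else if j = i + 1 then of_nat (i + 1)
      else 0)"

definition kron :: "real mat \<Rightarrow> real mat \<Rightarrow> real mat" where
  "kron A B = mat (dim_row A * dim_row B) (dim_col A * dim_col B)
      (\<lambda>(i,j). A $$ (i div dim_row B, j div dim_col B) * B $$ (i mod dim_row B, j mod dim_col B))"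

definition kac2_mat :: "nat \<Rightarrow> nat \<Rightarrow> real \<Rightarrow> real \<Rightarrow> real mat" where
  "kac2_mat n1 n2 x y = kron (1\<^sub>m n1) (kac_mat n2 y) + kron (kac_mat n1 x) (1\<^sub>m n2)"

definition Qmat :: "nat \<Rightarrow> nat \<Rightarrow> real \<Rightarrow> real \<Rightarrow> real mat" where
  "Qmat n1 n2 x y = four_block_mat (kac2_mat n1 n2 x y) (1\<^sub>m (n1*n2))
                                   (0\<^sub>m (n1*n2) (n1*n2)) (kac2_mat n1 n2 x y)"

definition e1Q :: "nat \<Rightarrow> nat \<Rightarrow> real \<Rightarrow> real \<Rightarrow> nat \<Rightarrow> real vec" where
  "e1Q n1 n2 x y s = row (Qmat n1 n2 x y ^\<^sub>m s) 0"

definition Nset :: "nat \<Rightarrow> int set" where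
  "Nset n = {int n - 1 - 2 * int r | r. r < n}"

definition indep_pair :: "nat \<Rightarrow> nat \<Rightarrow> complex \<Rightarrow> complex \<Rightarrow> bool" where
  "indep_pair n1 n2 z1 z2 \<longleftrightarrow>
     (\<forall>a1\<in>Nset n1. \<forall>b1\<in>Nset n1. \<forall>a2\<in>Nset n2. \<forall>b2\<in>Nset n2.
        of_int (a1 - b1) * z1 + of_int (a2 - b2) * z2 = 0 \<longrightarrow> a1 = b1 \<and> a2 = b2)"

abbreviation lin_dep_vecs :: "nat \<Rightarrow> real vec set \<Rightarrow> bool" where
  "lin_dep_vecs n S \<equiv> LinearCombinations.module.lin_dep class_ring (module_vec TYPE(real) n) S"

abbreviation span_vecs :: "nat \<Rightarrow> real vec set \<Rightarrow> real vec set" where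
  "span_vecs n S \<equiv> LinearCombinations.module.span class_ring (module_vec TYPE(real) n) S"

definition lin_indep_family :: "nat \<Rightarrow> real vec list \<Rightarrow> bool" where
  "lin_indep_family n vs \<longleftrightarrow> distinct vs \<and> \<not> lin_dep_vecs n (set vs)"

end

theory Submission
  imports Defs "HOL-Computational_Algebra.Polynomial"
begin

(*
  If K u = mu u, then the first row
  of Q^k pairs with (u, 0) to mu^k u_0 and with (0, u) to k mu^(k-1) u_0.  So a linear relation
  sum_k c_k e_1 Q^k = 0 makes every such mu with u_0 <> 0 a double root of q(x) = sum_k c_k x^k.
  Over the complex numbers K has the eigenvalues a1 sqrt tau1 + a2 sqrt tau2 (a_i in N_i), with
  eigenvectors built from the coefficients of (1 - z x)^r (1 + z x)^(n - 1 - r); independence makes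
  them pairwise distinct, and nonzero except for a1 = a2 = 0, which only occurs for odd N.
  Counting roots with multiplicity, together with the factor x^m when all exponents are at
  least m, bounds the degree of q from below and forces q = 0: 2N consecutive rows are
  independent for even N, and the rows 2, ..., 2N-1 for odd N.
  For odd N, K has a real null vector v with v_0 = 1 and v_j = 0 for odd j (0-based).  Every
  e_1 Q^k with k >= 2 is orthogonal to (v, 0) and (0, v): this gives the dependence of Lambda_s
  and expresses the first and the (N+1)-st column of the row matrix through the columns indexed
  by the support of v.
*)

context vec_space
begin

lemma lin_indpt_if_relations_trivial:
  fixes f :: "nat \<Rightarrow> 'a vec"
  assumes I: "finite I" and f: "f ` I \<subseteq> carrier_vec n"
    and trivial: "\<And>c k. (\<And>j. j < n \<Longrightarrow> (\<Sum>k\<in>I. c k * f k $ j) = 0) \<Longrightarrow> k \<in> I \<Longrightarrow> c k = 0"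
  shows "inj_on f I" and "lin_indpt (f ` I)"
proof -
  show inj: "inj_on f I"
  proof (rule inj_onI, rule ccontr)
    fix a b assume ab: "a \<in> I" "b \<in> I" "f a = f b" "a \<noteq> b"
    define c where "c = (\<lambda>k. if k = a then 1 else if k = b then -1 else (0::'a))"
    have "(\<Sum>k\<in>I. c k * f k $ j) = 0" for j
      using ab I by (simp add: c_def if_distrib if_distribR sum.If_cases Int_absorb2 Diff_Int_distrib)
    then have "c a = 0" using trivial ab(1) by blast
    then show False by (simp add: c_def)
  qed
  show "lin_indpt (f ` I)"
  proof
    assume "lin_dep (f ` I)"
    then obtain A a v where A: "finite A" "A \<subseteq> f ` I" and lc: "lincomb a A = 0\<^sub>v n"
      and vA: "v \<in> A" and av: "a v \<noteq> 0"
      unfolding lin_dep_def by auto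
    have A_carrier: "A \<subseteq> carrier_vec n" using A f by auto
    define c where "c = (\<lambda>k. if f k \<in> A then a (f k) else 0)"
    from vA A obtain k0 where k0: "k0 \<in> I" "v = f k0" by auto
    have "(\<Sum>k\<in>I. c k * f k $ j) = 0" if j: "j < n" for j
    proof -
      have "(\<Sum>k\<in>I. c k * f k $ j) = (\<Sum>k\<in>{k\<in>I. f k \<in> A}. a (f k) * f k $ j)"
        unfolding c_def using I
        by (simp add: sum.inter_filter[symmetric] if_distrib if_distribR cong: if_cong)
      also have "\<dots> = (\<Sum>x\<in>f ` {k\<in>I. f k \<in> A}. a x * x $ j)"
        by (rule sum.reindex[symmetric, unfolded comp_def]) (rule inj_on_subset[OF inj], auto)
      also have "f ` {k\<in>I. f k \<in> A} = A" using A by auto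
      also have "(\<Sum>x\<in>A. a x * x $ j) = lincomb a A $ j"
        by (rule lincomb_index[OF j A_carrier, symmetric])
      finally show ?thesis using lc j by simp
    qed
    then have "c k0 = 0" using trivial k0(1) by blast
    then show False using av k0 vA by (simp add: c_def)
  qed
qed

lemma lin_dep_if_orthogonal_to_nonisotropic:
  assumes S: "finite S" "S \<subseteq> carrier_vec n" and W: "finite W" "W \<subseteq> carrier_vec n"
    and S_W: "\<And>x w. x \<in> S \<Longrightarrow> w \<in> W \<Longrightarrow> x \<bullet> w = 0"
    and W_W: "\<And>w w'. w \<in> W \<Longrightarrow> w' \<in> W \<Longrightarrow> w' \<noteq> w \<Longrightarrow> w' \<bullet> w = 0"
    and nonisotropic: "\<And>w. w \<in> W \<Longrightarrow> w \<bullet> w \<noteq> 0"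
    and card: "n < card S + card W"
  shows "lin_dep S"
proof -
  have disj: "S \<inter> W = {}" using S_W nonisotropic by blast
  let ?T = "S \<union> W"
  have T: "finite ?T" "?T \<subseteq> carrier_vec n" using S W by auto
  have "lin_dep ?T"
    using li_le_dim(2)[OF fin_dim T(2)] card card_Un_disjoint[OF S(1) W(1) disj] dim_is_n by auto
  then obtain a v where lc: "lincomb a ?T = 0\<^sub>v n" and v: "v \<in> ?T" "a v \<noteq> 0"
    using finite_lin_dep[OF T(1) _ T(2)] by auto
  have coord: "(\<Sum>x\<in>?T. a x * x $ i) = 0" if "i < n" for i
    using lincomb_index[OF that T(2), of a] lc that by simp
  have a_W: "a w = 0" if w: "w \<in> W" for w
  proof -
    have "0 = (\<Sum>i<n. (\<Sum>x\<in>?T. a x * x $ i) * w $ i)" using coord by simp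
    also have "\<dots> = (\<Sum>x\<in>?T. a x * (x \<bullet> w))"
      using T(2) w W(2) unfolding scalar_prod_def
      by (auto simp: sum_distrib_left sum_distrib_right mult.assoc lessThan_atLeast0
          intro!: sum.swap sum.cong)
    also have "\<dots> = a w * (w \<bullet> w)"
    proof -
      have "\<forall>x\<in>?T - {w}. x \<bullet> w = 0" using w S_W W_W by blast
      then show ?thesis using T(1) w by (simp add: sum.remove[of _ w] sum.neutral)
    qed
    finally show ?thesis using nonisotropic[OF w] by simp
  qed
  have "lincomb a S = 0\<^sub>v n"
  proof (rule eq_vecI)
    fix i assume "i < dim_vec (0\<^sub>v n :: 'a vec)"
    then have i: "i < n" by simp
    have "lincomb a S $ i = (\<Sum>x\<in>?T. a x * x $ i)"
      using lincomb_index[OF i S(2)] a_W by (simp add: sum.union_disjoint[OF S(1) W(1) disj])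
    then show "lincomb a S $ i = 0\<^sub>v n $ i" using coord[OF i] i by simp
  qed (use lincomb_dim[OF S] in simp)
  then show ?thesis
    using v a_W by (intro lin_dep_crit[where A = S and S = S and a = a and v = v]) (auto simp: S)
qed

lemma span_memI_coordinates:
  assumes W: "W \<subseteq> carrier_vec n" and J: "finite J" "C ` J \<subseteq> W"
    and v: "v \<in> carrier_vec n" and coords: "\<And>i. i < n \<Longrightarrow> v $ i = (\<Sum>j\<in>J. a j * C j $ i)"
  shows "v \<in> span W"
  using J v coords
proof (induction J arbitrary: v rule: finite_induct)
  case empty
  then have "v = 0\<^sub>v n" by (intro eq_vecI) auto
  then show ?case using span_zero by simp
next
  case (insert j J)
  have Cj: "C j \<in> carrier_vec n" using insert.prems W by auto
  have "v - a j \<cdot>\<^sub>v C j \<in> span W"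
    by (rule insert.IH) (use insert Cj in auto)
  moreover have "a j \<cdot>\<^sub>v C j \<in> span W"
    using insert.prems(1) in_own_span[OF W] by (intro smult_in_span[OF W]) auto
  ultimately have "(v - a j \<cdot>\<^sub>v C j) + a j \<cdot>\<^sub>v C j \<in> span W"
    using span_add1[OF W] by simp
  also have "(v - a j \<cdot>\<^sub>v C j) + a j \<cdot>\<^sub>v C j = v"
    using insert.prems(2) Cj by auto
  finally show ?case .
qed

lemma col_in_span_if_mult_vec_zero:
  assumes A: "A \<in> carrier_mat n nc" and w: "w \<in> carrier_vec nc" and Aw: "A *\<^sub>v w = 0\<^sub>v n"
    and j0: "j0 < nc" "w $ j0 = 1"
  shows "col A j0 \<in> span {col A j | j. j < nc \<and> j \<noteq> j0 \<and> w $ j \<noteq> 0}"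
proof (rule span_memI_coordinates)
  let ?J = "{j. j < nc \<and> j \<noteq> j0 \<and> w $ j \<noteq> 0}"
  show "finite ?J" by simp
  fix i assume i: "i < n"
  have "0 = (\<Sum>j<nc. A $$ (i, j) * w $ j)"
    using arg_cong[OF Aw, of "\<lambda>x. x $ i"] A w i
    by (simp add: scalar_prod_def row_def lessThan_atLeast0 mult.commute)
  also have "\<dots> = A $$ (i, j0) + (\<Sum>j\<in>{..<nc} - {j0}. A $$ (i, j) * w $ j)"
    using j0 by (simp add: sum.remove[of _ j0])
  also have "(\<Sum>j\<in>{..<nc} - {j0}. A $$ (i, j) * w $ j) = (\<Sum>j\<in>?J. A $$ (i, j) * w $ j)"
    by (rule sum.mono_neutral_right) auto
  finally show "col A j0 $ i = (\<Sum>j\<in>?J. - w $ j * col A j $ i)"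
    using A i j0 by (simp add: sum_negf mult.commute eq_neg_iff_add_eq_0 add.commute)
qed (use A in auto)

end

lemma real_scalar_prod_self_nonzero:
  fixes v :: "real vec"
  assumes "i < dim_vec v" and "v $ i \<noteq> 0"
  shows "v \<bullet> v \<noteq> 0"
proof -
  have "v $ i * v $ i \<le> v \<bullet> v"
    unfolding scalar_prod_def using assms(1) by (intro member_le_sum) auto
  moreover have "0 < (v $ i)\<^sup>2" using assms(2) by simp
  ultimately show ?thesis by (simp add: power2_eq_square)
qed

lemma degree_ge_root_multiplicities:
  fixes q :: "'a::{idom,semiring_char_0} poly"
  assumes q: "q \<noteq> 0" and M: "finite M" "0 \<notin> M"
    and double_roots: "\<And>\<mu>. \<mu> \<in> M \<Longrightarrow> poly q \<mu> = 0 \<and> poly (pderiv q) \<mu> = 0"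
    and power_dvd: "[:0, 1:] ^ m dvd q"
  shows "m + 2 * card M \<le> degree q"
proof -
  have order_M: "2 \<le> order \<mu> q" if \<mu>: "\<mu> \<in> M" for \<mu>
  proof -
    have "pderiv q \<noteq> 0"
    proof
      assume "pderiv q = 0"
      then obtain c where "q = [:c:]" using pderiv_eq_0_iff degree_eq_zeroE by metis
      then show False using q double_roots[OF \<mu>] by simp
    qed
    then have "order \<mu> (pderiv q) \<noteq> 0" using double_roots[OF \<mu>] by (simp add: order_root)
    then show ?thesis using order_pderiv[OF q] double_roots[OF \<mu>] by simp
  qed
  have "m \<le> order 0 q" using power_dvd q order_divides[of 0 m q] by simp
  moreover have "2 * card M \<le> (\<Sum>x\<in>M. order x q)"
    using sum_mono[of M "\<lambda>_. 2" "\<lambda>x. order x q"] order_M by simp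
  ultimately have "m + 2 * card M \<le> (\<Sum>x\<in>insert 0 M. order x q)"
    using M by simp
  also have "\<dots> = (\<Sum>x\<in>{x\<in>insert 0 M. poly q x = 0}. order x q)"
    using M q by (intro sum.mono_neutral_right) (auto simp: order_root)
  also have "\<dots> \<le> (\<Sum>x | poly q x = 0. order x q)"
    using q poly_roots_finite by (intro sum_mono2) auto
  also have "\<dots> \<le> degree q" by (rule sum_order_le_degree[OF q])
  finally show ?thesis .
qed

lemma pderiv_sum: "pderiv (\<Sum>x\<in>A. p x) = (\<Sum>x\<in>A. pderiv (p x))"
  using higher_pderiv_sum[of 1 p A] by simp

lemma mult_pderiv_power: "p * pderiv (p ^ n) = Polynomial.smult (of_nat n) (p ^ n * pderiv p)"
  for p :: "'a::field poly"
proof (cases n)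
  case (Suc k)
  show ?thesis unfolding Suc pderiv_power_Suc by (simp add: mult_ac)
qed simp

lemma coeff_even_power_odd: "odd k \<Longrightarrow> coeff ([:1, 0, c:] ^ h) k = 0"
proof (induction h arbitrary: k)
  case 0
  then show ?case by (cases k) auto
next
  case (Suc h)
  have "[:1, 0, c:] ^ Suc h = [:1, 0, c:] ^ h + pCons 0 (pCons 0 (Polynomial.smult c ([:1, 0, c:] ^ h)))"
    by (simp add: algebra_simps)
  moreover have "coeff (pCons 0 (pCons 0 (Polynomial.smult c ([:1, 0, c:] ^ h)))) k = 0"
    using Suc.prems Suc.IH[of "k - 2"] by (cases k; cases "k - 1") auto
  ultimately show ?case using Suc.IH[OF Suc.prems] by simp
qed

definition block_jordan :: "nat \<Rightarrow> 'a::semiring_1 mat \<Rightarrow> 'a mat" where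
  "block_jordan n K = four_block_mat K (1\<^sub>m n) (0\<^sub>m n n) K"

lemma block_jordan_carrier: "K \<in> carrier_mat n n \<Longrightarrow> block_jordan n K \<in> carrier_mat (2 * n) (2 * n)"
  unfolding block_jordan_def mult_2 by auto

lemma block_jordan_mult_vec:
  fixes K :: "'a::field mat"
  assumes K: "K \<in> carrier_mat n n" and u: "u \<in> carrier_vec n" and Ku: "K *\<^sub>v u = \<mu> \<cdot>\<^sub>v u"
  shows "block_jordan n K *\<^sub>v (a \<cdot>\<^sub>v u @\<^sub>v b \<cdot>\<^sub>v u) = (a * \<mu> + b) \<cdot>\<^sub>v u @\<^sub>v (b * \<mu>) \<cdot>\<^sub>v u"
proof -
  have "block_jordan n K *\<^sub>v (a \<cdot>\<^sub>v u @\<^sub>v b \<cdot>\<^sub>v u)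
      = (K *\<^sub>v (a \<cdot>\<^sub>v u) + 1\<^sub>m n *\<^sub>v (b \<cdot>\<^sub>v u)) @\<^sub>v (0\<^sub>m n n *\<^sub>v (a \<cdot>\<^sub>v u) + K *\<^sub>v (b \<cdot>\<^sub>v u))"
    unfolding block_jordan_def by (rule four_block_mat_mult_vec) (use K u in auto)
  also have "\<dots> = (a * \<mu> + b) \<cdot>\<^sub>v u @\<^sub>v (b * \<mu>) \<cdot>\<^sub>v u"
    using u by (auto simp: mult_mat_vec[OF K u] Ku algebra_simps)
  finally show ?thesis .
qed

lemma block_jordan_power_mult_vec:
  fixes K :: "'a::field mat"
  assumes K: "K \<in> carrier_mat n n" and u: "u \<in> carrier_vec n" and Ku: "K *\<^sub>v u = \<mu> \<cdot>\<^sub>v u"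
  shows "block_jordan n K ^\<^sub>m k *\<^sub>v (a \<cdot>\<^sub>v u @\<^sub>v b \<cdot>\<^sub>v u)
       = (a * \<mu> ^ k + b * of_nat k * \<mu> ^ (k - 1)) \<cdot>\<^sub>v u @\<^sub>v (b * \<mu> ^ k) \<cdot>\<^sub>v u"
proof (induction k arbitrary: a b)
  case 0
  have "a \<cdot>\<^sub>v u @\<^sub>v b \<cdot>\<^sub>v u \<in> carrier_vec (n + n)" using u by simp
  then show ?case using K by (simp add: block_jordan_def)
next
  case (Suc k)
  have Q: "block_jordan n K \<in> carrier_mat (n + n) (n + n)"
    using block_jordan_carrier[OF K] by (simp add: mult_2)
  have "block_jordan n K ^\<^sub>m Suc k *\<^sub>v (a \<cdot>\<^sub>v u @\<^sub>v b \<cdot>\<^sub>v u)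
      = block_jordan n K ^\<^sub>m k *\<^sub>v (block_jordan n K *\<^sub>v (a \<cdot>\<^sub>v u @\<^sub>v b \<cdot>\<^sub>v u))"
    using Q u by (simp add: assoc_mult_mat_vec[of _ "n + n" "n + n" _ "n + n"])
  also have "\<dots> = block_jordan n K ^\<^sub>m k *\<^sub>v ((a * \<mu> + b) \<cdot>\<^sub>v u @\<^sub>v (b * \<mu>) \<cdot>\<^sub>v u)"
    by (simp add: block_jordan_mult_vec[OF K u Ku])
  also have "\<dots> = (a * \<mu> ^ Suc k + b * of_nat (Suc k) * \<mu> ^ (Suc k - 1)) \<cdot>\<^sub>v u @\<^sub>v (b * \<mu> ^ Suc k) \<cdot>\<^sub>v u"
    unfolding Suc.IH by (cases k) (simp_all add: algebra_simps)
  finally show ?case .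
qed

lemma row_block_jordan_power_scalar_prod:
  fixes K :: "'a::field mat"
  assumes K: "K \<in> carrier_mat n n" and u: "u \<in> carrier_vec n" and Ku: "K *\<^sub>v u = \<mu> \<cdot>\<^sub>v u"
    and n: "0 < n"
  shows "row (block_jordan n K ^\<^sub>m k) 0 \<bullet> (u @\<^sub>v 0\<^sub>v n) = \<mu> ^ k * u $ 0"
    and "row (block_jordan n K ^\<^sub>m k) 0 \<bullet> (0\<^sub>v n @\<^sub>v u) = of_nat k * \<mu> ^ (k - 1) * u $ 0"
proof -
  have Q: "block_jordan n K ^\<^sub>m k \<in> carrier_mat (2 * n) (2 * n)"
    using block_jordan_carrier[OF K] by simp
  have row0: "row (block_jordan n K ^\<^sub>m k) 0 \<bullet> x = (block_jordan n K ^\<^sub>m k *\<^sub>v x) $ 0" for x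
    using carrier_matD(1)[OF Q] n by simp
  have one: "1 \<cdot>\<^sub>v u = u" and zero: "0 \<cdot>\<^sub>v u = 0\<^sub>v n" using u by auto
  have "block_jordan n K ^\<^sub>m k *\<^sub>v (u @\<^sub>v 0\<^sub>v n) = \<mu> ^ k \<cdot>\<^sub>v u @\<^sub>v 0\<^sub>v n"
    using block_jordan_power_mult_vec[OF K u Ku, of k 1 0] unfolding one zero by (simp add: zero)
  then show "row (block_jordan n K ^\<^sub>m k) 0 \<bullet> (u @\<^sub>v 0\<^sub>v n) = \<mu> ^ k * u $ 0"
    using n u by (simp add: row0)
  have "block_jordan n K ^\<^sub>m k *\<^sub>v (0\<^sub>v n @\<^sub>v u) = (of_nat k * \<mu> ^ (k - 1)) \<cdot>\<^sub>v u @\<^sub>v \<mu> ^ k \<cdot>\<^sub>v u"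
    using block_jordan_power_mult_vec[OF K u Ku, of k 0 1] unfolding one zero by (simp add: zero)
  then show "row (block_jordan n K ^\<^sub>m k) 0 \<bullet> (0\<^sub>v n @\<^sub>v u) = of_nat k * \<mu> ^ (k - 1) * u $ 0"
    using n u by (simp add: row0)
qed

definition e1_visible_eigenvalue :: "real mat \<Rightarrow> complex \<Rightarrow> bool" where
  "e1_visible_eigenvalue K \<mu> \<longleftrightarrow>
     (\<exists>u \<in> carrier_vec (dim_row K). map_mat complex_of_real K *\<^sub>v u = \<mu> \<cdot>\<^sub>v u \<and> u $ 0 \<noteq> 0)"

lemma of_real_block_jordan:
  assumes "K \<in> carrier_mat n n"
  shows "map_mat complex_of_real (block_jordan n K) = block_jordan n (map_mat complex_of_real K)"
  using assms by (intro eq_matI) (auto simp: block_jordan_def)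

lemma block_jordan_relation_double_root:
  fixes K :: "real mat" and c :: "nat \<Rightarrow> real"
  assumes K: "K \<in> carrier_mat n n" and n: "0 < n" and \<mu>: "e1_visible_eigenvalue K \<mu>"
    and rel: "\<And>j. j < 2 * n \<Longrightarrow> (\<Sum>k\<in>I. c k * row (block_jordan n K ^\<^sub>m k) 0 $ j) = 0"
  shows "poly (\<Sum>k\<in>I. monom (complex_of_real (c k)) k) \<mu> = 0"
    and "poly (pderiv (\<Sum>k\<in>I. monom (complex_of_real (c k)) k)) \<mu> = 0"
proof -
  let ?Kc = "map_mat complex_of_real K"
  obtain u where u: "u \<in> carrier_vec n" and Ku: "?Kc *\<^sub>v u = \<mu> \<cdot>\<^sub>v u" and u0: "u $ 0 \<noteq> 0"
    using \<mu> K unfolding e1_visible_eigenvalue_def by auto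
  have Kc: "?Kc \<in> carrier_mat n n" using K by simp
  have Q: "block_jordan n K ^\<^sub>m k \<in> carrier_mat (2 * n) (2 * n)" for k
    using block_jordan_carrier[OF K] by simp
  have row_Qc: "row (block_jordan n ?Kc ^\<^sub>m k) 0 $ j
      = complex_of_real (row (block_jordan n K ^\<^sub>m k) 0 $ j)" if j: "j < 2 * n" for k j
  proof -
    have "block_jordan n ?Kc ^\<^sub>m k = map_mat complex_of_real (block_jordan n K ^\<^sub>m k)"
      by (simp only: of_real_hom.mat_hom_pow[OF block_jordan_carrier[OF K]] of_real_block_jordan[OF K])
    then show ?thesis using carrier_matD[OF Q[of k]] j n by simp
  qed
  have pairing: "(\<Sum>k\<in>I. complex_of_real (c k) * (row (block_jordan n ?Kc ^\<^sub>m k) 0 \<bullet> U)) = 0"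
    if U: "U \<in> carrier_vec (2 * n)" for U
  proof -
    have "(\<Sum>k\<in>I. complex_of_real (c k) * (row (block_jordan n ?Kc ^\<^sub>m k) 0 \<bullet> U))
        = (\<Sum>k\<in>I. \<Sum>j<2 * n.
             complex_of_real (c k) * complex_of_real (row (block_jordan n K ^\<^sub>m k) 0 $ j) * U $ j)"
      using U row_Qc
      by (auto simp: scalar_prod_def sum_distrib_left lessThan_atLeast0 mult.assoc intro!: sum.cong)
    also have "\<dots> = (\<Sum>j<2 * n. complex_of_real (\<Sum>k\<in>I. c k * row (block_jordan n K ^\<^sub>m k) 0 $ j) * U $ j)"
      by (subst sum.swap) (simp add: sum_distrib_right)
    also have "\<dots> = 0" using rel by simp
    finally show ?thesis .
  qed
  have "(\<Sum>k\<in>I. complex_of_real (c k) * \<mu> ^ k) * u $ 0 = 0"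
    using pairing[of "u @\<^sub>v 0\<^sub>v n"] row_block_jordan_power_scalar_prod(1)[OF Kc u Ku n] u
    by (simp add: mult_2 sum_distrib_right mult.assoc)
  then show "poly (\<Sum>k\<in>I. monom (complex_of_real (c k)) k) \<mu> = 0"
    using u0 by (simp add: poly_sum poly_monom)
  have "(\<Sum>k\<in>I. complex_of_real (c k) * of_nat k * \<mu> ^ (k - 1)) * u $ 0 = 0"
    using pairing[of "0\<^sub>v n @\<^sub>v u"] row_block_jordan_power_scalar_prod(2)[OF Kc u Ku n] u
    by (simp add: mult_2 sum_distrib_right mult.assoc)
  then show "poly (pderiv (\<Sum>k\<in>I. monom (complex_of_real (c k)) k)) \<mu> = 0"
    using u0 by (simp add: pderiv_sum pderiv_monom poly_sum poly_monom mult_ac)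
qed

lemma block_jordan_relation_trivial:
  fixes K :: "real mat" and c :: "nat \<Rightarrow> real"
  assumes K: "K \<in> carrier_mat n n" and n: "0 < n"
    and M: "finite M" "0 \<notin> M" "\<And>\<mu>. \<mu> \<in> M \<Longrightarrow> e1_visible_eigenvalue K \<mu>"
    and I: "I \<subseteq> {m..<m + 2 * card M}"
    and rel: "\<And>j. j < 2 * n \<Longrightarrow> (\<Sum>k\<in>I. c k * row (block_jordan n K ^\<^sub>m k) 0 $ j) = 0"
    and k: "k \<in> I"
  shows "c k = 0"
proof -
  define q where "q = (\<Sum>k\<in>I. monom (complex_of_real (c k)) k)"
  have "q = 0"
  proof (rule ccontr)
    assume q: "q \<noteq> 0"
    have "[:0, 1:] ^ m dvd q"
      unfolding q_def
    proof (rule dvd_sum)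
      fix k assume "k \<in> I"
      then have "monom (complex_of_real (c k)) k = [:0, 1:] ^ m * monom (complex_of_real (c k)) (k - m)"
        using I by (auto simp: monom_altdef power_add[symmetric])
      then show "[:0, 1:] ^ m dvd monom (complex_of_real (c k)) k" by simp
    qed
    then have "m + 2 * card M \<le> degree q"
      using degree_ge_root_multiplicities[OF q M(1,2)] block_jordan_relation_double_root[OF K n M(3) rel]
      unfolding q_def by blast
    moreover have "degree q \<le> m + 2 * card M - 1"
      unfolding q_def
    proof (rule degree_sum_le)
      show "finite I" using finite_subset[OF I] by simp
      fix p assume "p \<in> I"
      then have "p < m + 2 * card M" using I by auto
      then show "degree (monom (complex_of_real (c p)) p) \<le> m + 2 * card M - 1"
        using degree_monom_le[of "complex_of_real (c p)" p] by linarith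
    qed
    ultimately show False using I k by fastforce
  qed
  then have "coeff q k = 0" by simp
  then show ?thesis
    using k finite_subset[OF I] by (simp add: q_def coeff_sum)
qed

lemma block_jordan_rows_lin_indep:
  fixes K :: "real mat"
  assumes K: "K \<in> carrier_mat n n" and n: "0 < n"
    and M: "finite M" "0 \<notin> M" "\<And>\<mu>. \<mu> \<in> M \<Longrightarrow> e1_visible_eigenvalue K \<mu>"
    and I: "I \<subseteq> {m..<m + 2 * card M}"
  shows "inj_on (\<lambda>k. row (block_jordan n K ^\<^sub>m k) 0) I"
    and "\<not> lin_dep_vecs (2 * n) ((\<lambda>k. row (block_jordan n K ^\<^sub>m k) 0) ` I)"
proof -
  interpret vec_space "TYPE(real)" "2 * n" .
  have fin: "finite I" using I finite_subset by blast
  have rows: "(\<lambda>k. row (block_jordan n K ^\<^sub>m k) 0) ` I \<subseteq> carrier_vec (2 * n)"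
    using n
    by (intro image_subsetI row_carrier_vec[of 0 "2 * n"] pow_carrier_mat block_jordan_carrier[OF K]) auto
  have trivial: "c k = 0"
    if "\<And>j. j < 2 * n \<Longrightarrow> (\<Sum>k\<in>I. c k * row (block_jordan n K ^\<^sub>m k) 0 $ j) = 0" and "k \<in> I"
    for c k
    using block_jordan_relation_trivial[OF K n M(1,2) _ I] M(3) that by blast
  show "inj_on (\<lambda>k. row (block_jordan n K ^\<^sub>m k) 0) I"
    using lin_indpt_if_relations_trivial(1)[OF fin rows] trivial by blast
  show "\<not> lin_dep_vecs (2 * n) ((\<lambda>k. row (block_jordan n K ^\<^sub>m k) 0) ` I)"
    using lin_indpt_if_relations_trivial(2)[OF fin rows] trivial by blast
qed

lemma block_jordan_rows_inj:
  fixes K :: "real mat"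
  assumes K: "K \<in> carrier_mat n n" and n: "0 < n"
    and \<mu>: "e1_visible_eigenvalue K \<mu>" and \<mu>0: "\<mu> \<noteq> 0"
  shows "inj (\<lambda>k. row (block_jordan n K ^\<^sub>m k) 0)"
proof (rule injI, rule ccontr)
  fix k s assume eq: "row (block_jordan n K ^\<^sub>m k) 0 = row (block_jordan n K ^\<^sub>m s) 0" and ks: "k \<noteq> s"
  define c where "c = (\<lambda>i. if i = k then 1 else - 1 :: real)"
  have "(\<Sum>i\<in>{k, s}. c i * row (block_jordan n K ^\<^sub>m i) 0 $ j) = 0" for j
    using eq ks by (simp add: c_def)
  note double_root = block_jordan_relation_double_root[OF K n \<mu> this]
  have "\<mu> ^ k = \<mu> ^ s"
    using double_root(1) ks by (simp add: c_def poly_monom)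
  moreover have "of_nat k * \<mu> ^ (k - 1) = of_nat s * \<mu> ^ (s - 1)"
    using double_root(2) ks by (simp add: c_def pderiv_add pderiv_monom poly_monom)
  then have "of_nat k * \<mu> ^ k = of_nat s * \<mu> ^ s"
    by (cases k; cases s) (auto simp: mult.left_commute[of \<mu>])
  ultimately have "(of_nat k - of_nat s) * \<mu> ^ k = 0" by (simp add: algebra_simps)
  then show False using ks \<mu>0 by simp
qed

lemma less_mult_imp_div_mod_less:
  fixes i m n :: nat
  assumes "i < m * n"
  shows "i div n < m" and "i mod n < n"
proof -
  have "0 < n" using assms by (auto intro: Nat.gr0I)
  then show "i div n < m" and "i mod n < n"
    using assms by (auto simp: less_mult_imp_div_less mult.commute[of m])
qed

lemma sum_lessThan_mult: "(\<Sum>j<m * n. g j) = (\<Sum>j1<m. \<Sum>j2<n. g (j1 * n + j2))"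
  for m n :: nat
proof -
  have "(\<Sum>j\<in>{j1 * n..<j1 * n + n}. g j) = (\<Sum>j2<n. g (j1 * n + j2))" for j1
    using sum.shift_bounds_nat_ivl[of g 0 "j1 * n" n] by (simp add: atLeast0LessThan add.commute)
  then show ?thesis using sum.nat_group[of g n m] by (simp add: mult.commute)
qed

definition kronecker_mat :: "'a::times mat \<Rightarrow> 'a mat \<Rightarrow> 'a mat" where
  "kronecker_mat A B = mat (dim_row A * dim_row B) (dim_col A * dim_col B)
      (\<lambda>(i, j). A $$ (i div dim_row B, j div dim_col B) * B $$ (i mod dim_row B, j mod dim_col B))"

definition kronecker_vec :: "'a::times vec \<Rightarrow> 'a vec \<Rightarrow> 'a vec" where
  "kronecker_vec v w = vec (dim_vec v * dim_vec w) (\<lambda>i. v $ (i div dim_vec w) * w $ (i mod dim_vec w))"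

lemma kron_eq_kronecker_mat: "kron = kronecker_mat"
  by (intro ext) (simp add: kron_def kronecker_mat_def)

lemma kronecker_mat_carrier:
  "A \<in> carrier_mat r1 c1 \<Longrightarrow> B \<in> carrier_mat r2 c2 \<Longrightarrow> kronecker_mat A B \<in> carrier_mat (r1 * r2) (c1 * c2)"
  by (simp add: kronecker_mat_def)

lemma of_real_add_mat:
  assumes "A \<in> carrier_mat nr nc" and "B \<in> carrier_mat nr nc"
  shows "map_mat of_real (A + B) = map_mat of_real A + map_mat of_real B"
  using assms by (intro eq_matI) auto

lemma of_real_kronecker_mat:
  "map_mat of_real (kronecker_mat A B) = kronecker_mat (map_mat of_real A) (map_mat of_real B)"
proof (rule eq_matI)
  fix i j assume "i < dim_row (kronecker_mat (map_mat of_real A) (map_mat of_real B))"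
    and "j < dim_col (kronecker_mat (map_mat of_real A) (map_mat of_real B))"
  then have "i < dim_row A * dim_row B" "j < dim_col A * dim_col B"
    by (simp_all add: kronecker_mat_def)
  then show "map_mat of_real (kronecker_mat A B) $$ (i, j)
      = kronecker_mat (map_mat of_real A) (map_mat of_real B) $$ (i, j)"
    by (simp add: kronecker_mat_def less_mult_imp_div_mod_less)
qed (simp_all add: kronecker_mat_def)

lemma kronecker_mat_mult_vec:
  fixes A B :: "'a::comm_semiring_0 mat"
  assumes A: "A \<in> carrier_mat r1 c1" and B: "B \<in> carrier_mat r2 c2"
    and v: "v \<in> carrier_vec c1" and w: "w \<in> carrier_vec c2"
  shows "kronecker_mat A B *\<^sub>v kronecker_vec v w = kronecker_vec (A *\<^sub>v v) (B *\<^sub>v w)"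
proof (rule eq_vecI)
  fix i assume "i < dim_vec (kronecker_vec (A *\<^sub>v v) (B *\<^sub>v w))"
  then have i: "i < r1 * r2" using A B by (simp add: kronecker_vec_def)
  note i1 = less_mult_imp_div_mod_less(1)[OF i] and i2 = less_mult_imp_div_mod_less(2)[OF i]
  have "(kronecker_mat A B *\<^sub>v kronecker_vec v w) $ i
      = (\<Sum>j<c1 * c2. A $$ (i div r2, j div c2) * B $$ (i mod r2, j mod c2)
                        * (v $ (j div c2) * w $ (j mod c2)))"
    using A B v w i by (simp add: kronecker_mat_def kronecker_vec_def scalar_prod_def lessThan_atLeast0)
  also have "\<dots> = (\<Sum>j1<c1. \<Sum>j2<c2. (A $$ (i div r2, j1) * v $ j1) * (B $$ (i mod r2, j2) * w $ j2))"
    unfolding sum_lessThan_mult by (intro sum.cong refl) (simp add: algebra_simps)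
  also have "\<dots> = (A *\<^sub>v v) $ (i div r2) * (B *\<^sub>v w) $ (i mod r2)"
    using A B v w i1 i2 by (simp add: sum_product scalar_prod_def lessThan_atLeast0 mult.commute)
  finally show "(kronecker_mat A B *\<^sub>v kronecker_vec v w) $ i = kronecker_vec (A *\<^sub>v v) (B *\<^sub>v w) $ i"
    using A B i by (simp add: kronecker_vec_def)
qed (use A B v w in \<open>simp add: kronecker_mat_def kronecker_vec_def\<close>)

lemma kronecker_sum_eigenvector:
  fixes A B :: "'a::field mat"
  assumes A: "A \<in> carrier_mat n1 n1" and B: "B \<in> carrier_mat n2 n2"
    and v: "v \<in> carrier_vec n1" and w: "w \<in> carrier_vec n2"
    and Av: "A *\<^sub>v v = a \<cdot>\<^sub>v v" and Bw: "B *\<^sub>v w = b \<cdot>\<^sub>v w"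
  shows "(kronecker_mat (1\<^sub>m n1) B + kronecker_mat A (1\<^sub>m n2)) *\<^sub>v kronecker_vec v w
       = (a + b) \<cdot>\<^sub>v kronecker_vec v w"
proof -
  have kv: "kronecker_vec v w \<in> carrier_vec (n1 * n2)"
    using v w by (simp add: kronecker_vec_def)
  have "(kronecker_mat (1\<^sub>m n1) B + kronecker_mat A (1\<^sub>m n2)) *\<^sub>v kronecker_vec v w
      = kronecker_mat (1\<^sub>m n1) B *\<^sub>v kronecker_vec v w + kronecker_mat A (1\<^sub>m n2) *\<^sub>v kronecker_vec v w"
    by (rule add_mult_distrib_mat_vec[OF kronecker_mat_carrier kronecker_mat_carrier kv])
      (use A B in auto)
  also have "\<dots> = kronecker_vec v (b \<cdot>\<^sub>v w) + kronecker_vec (a \<cdot>\<^sub>v v) w"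
    using kronecker_mat_mult_vec[OF one_carrier_mat B v w] kronecker_mat_mult_vec[OF A one_carrier_mat v w]
      v w Av Bw by simp
  also have "\<dots> = (a + b) \<cdot>\<^sub>v kronecker_vec v w"
  proof (rule eq_vecI)
    fix i assume "i < dim_vec ((a + b) \<cdot>\<^sub>v kronecker_vec v w)"
    then have i: "i < n1 * n2" using v w by (simp add: kronecker_vec_def)
    show "(kronecker_vec v (b \<cdot>\<^sub>v w) + kronecker_vec (a \<cdot>\<^sub>v v) w) $ i
        = ((a + b) \<cdot>\<^sub>v kronecker_vec v w) $ i"
      using i less_mult_imp_div_mod_less[OF i] v w by (simp add: kronecker_vec_def algebra_simps)
  qed (simp add: kronecker_vec_def)
  finally show ?thesis .
qed

definition kac_matrix :: "nat \<Rightarrow> 'a::semiring_1 \<Rightarrow> 'a mat" where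
  "kac_matrix m y = mat m m (\<lambda>(i, j).
      if j + 1 = i then of_nat (m - i) * y else if j = i + 1 then of_nat (i + 1) else 0)"

lemma kac_matrix_carrier [simp]: "kac_matrix m y \<in> carrier_mat m m"
  by (simp add: kac_matrix_def)

lemma kac_mat_eq_kac_matrix: "kac_mat m y = kac_matrix m y"
  by (simp add: kac_mat_def kac_matrix_def)

lemma of_real_kac_matrix:
  "map_mat complex_of_real (kac_matrix m y) = kac_matrix m (complex_of_real y)"
  by (rule eq_matI) (auto simp: kac_matrix_def)

lemma kac_matrix_mult_vec:
  fixes c :: "nat \<Rightarrow> 'a::field"
  assumes i: "i < m"
  shows "(kac_matrix m y *\<^sub>v vec m c) $ i =
     (if 0 < i then of_nat (m - i) * y * c (i - 1) else 0)
     + (if i + 1 < m then of_nat (i + 1) * c (i + 1) else 0)"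
proof -
  have "(kac_matrix m y *\<^sub>v vec m c) $ i = (\<Sum>j<m. kac_matrix m y $$ (i, j) * c j)"
    using i by (simp add: scalar_prod_def kac_matrix_def row_def lessThan_atLeast0)
  also have "\<dots> = (\<Sum>j<m. (if j = i - 1 \<and> 0 < i then of_nat (m - i) * y * c j else 0)
        + (if j = i + 1 then of_nat (i + 1) * c j else 0))"
    by (rule sum.cong) (use i in \<open>auto simp: kac_matrix_def\<close>)
  also have "\<dots> = (if 0 < i then of_nat (m - i) * y * c (i - 1) else 0)
                   + (if i + 1 < m then of_nat (i + 1) * c (i + 1) else 0)"
    using i by (auto simp add: sum.distrib conj_commute)
  finally show ?thesis .
qed

(* On coefficient vectors of polynomials of degree below m, kac_matrix m y acts as
   f \<mapsto> (m - 1) y x f + (1 - y x^2) f'. *)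
lemma kac_matrix_eigenvector_poly:
  fixes f :: "'a::field poly"
  assumes deg: "degree f < m"
    and ode: "[:1, 0, -y:] * pderiv f = [:lam, - of_nat (m - 1) * y:] * f"
  shows "kac_matrix m y *\<^sub>v vec m (coeff f) = lam \<cdot>\<^sub>v vec m (coeff f)"
proof (rule eq_vecI)
  fix i assume "i < dim_vec (lam \<cdot>\<^sub>v vec m (coeff f))"
  hence i: "i < m" by simp
  have cm: "coeff f m = 0" using deg by (simp add: coeff_eq_0)
  have E: "coeff ([:1, 0, -y:] * pderiv f) i = coeff ([:lam, - of_nat (m - 1) * y:] * f) i"
    using ode by simp
  show "(kac_matrix m y *\<^sub>v vec m (coeff f)) $ i = (lam \<cdot>\<^sub>v vec m (coeff f)) $ i"
  proof (cases i)
    case 0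
    then show ?thesis using E i cm by (cases m) (auto simp: kac_matrix_mult_vec coeff_pderiv)
  next
    case (Suc k)
    have "(kac_matrix m y *\<^sub>v vec m (coeff f)) $ i
        = of_nat (m - i) * y * coeff f k + of_nat (i + 1) * coeff f (i + 1)"
      using i cm Suc by (cases "Suc (Suc k) = m") (auto simp: kac_matrix_mult_vec)
    also have "\<dots> = lam * coeff f i"
      using E Suc i by (cases k) (auto simp: coeff_pderiv algebra_simps)
    finally show ?thesis using i by simp
  qed
qed (simp add: kac_matrix_def)

definition kac_eigenvector :: "nat \<Rightarrow> 'a::field \<Rightarrow> nat \<Rightarrow> 'a vec" where
  "kac_eigenvector m z r = vec m (coeff ([:1, -z:] ^ r * [:1, z:] ^ (m - 1 - r)))"

lemma kac_matrix_eigenvector: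
  fixes z :: "'a::field"
  assumes r: "r < m"
  shows "kac_matrix m (z * z) *\<^sub>v kac_eigenvector m z r
           = (z * (of_nat (m - 1 - r) - of_nat r)) \<cdot>\<^sub>v kac_eigenvector m z r"
    and "kac_eigenvector m z r $ 0 = 1"
    and "kac_eigenvector m z r \<in> carrier_vec m"
proof -
  define P where "P = [:1, -z:]"
  define Q where "Q = [:1, z:]"
  define s where "s = m - 1 - r"
  have "degree (P ^ r * Q ^ s) \<le> degree (P ^ r) + degree (Q ^ s)"
    by (rule degree_mult_le)
  also have "\<dots> \<le> r + s"
  proof -
    have "degree P \<le> 1" "degree Q \<le> 1"
      unfolding P_def Q_def by simp_all
    then have "degree P * r \<le> r" "degree Q * s \<le> s"
      using mult_le_mono1 by fastforce+
    then show ?thesis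
      using degree_power_le[of P r] degree_power_le[of Q s] by linarith
  qed
  finally have deg: "degree (P ^ r * Q ^ s) < m" using r unfolding s_def by linarith
  have PQ: "[:1, 0, -(z * z):] = P * Q" by (simp add: P_def Q_def)
  have "[:1, 0, -(z * z):] * pderiv (P ^ r * Q ^ s)
      = P ^ r * (Q * pderiv (Q ^ s)) * P + Q ^ s * (P * pderiv (P ^ r)) * Q"
    unfolding PQ pderiv_mult by (simp add: algebra_simps)
  also have "\<dots> = (P ^ r * Q ^ s) * (Polynomial.smult (of_nat s) (P * pderiv Q)
                                       + Polynomial.smult (of_nat r) (Q * pderiv P))"
    unfolding mult_pderiv_power by (simp add: algebra_simps)
  also have "Polynomial.smult (of_nat s) (P * pderiv Q) + Polynomial.smult (of_nat r) (Q * pderiv P)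
      = [:z * (of_nat s - of_nat r), - of_nat (m - 1) * (z * z):]"
    using r by (simp add: P_def Q_def s_def pderiv_pCons algebra_simps)
  finally have ode: "[:1, 0, -(z * z):] * pderiv (P ^ r * Q ^ s)
      = [:z * (of_nat s - of_nat r), - of_nat (m - 1) * (z * z):] * (P ^ r * Q ^ s)"
    by (simp add: mult.commute)
  show "kac_matrix m (z * z) *\<^sub>v kac_eigenvector m z r
           = (z * (of_nat (m - 1 - r) - of_nat r)) \<cdot>\<^sub>v kac_eigenvector m z r"
    using kac_matrix_eigenvector_poly[OF deg ode] by (simp add: kac_eigenvector_def P_def Q_def s_def)
  show "kac_eigenvector m z r $ 0 = 1"
    using r by (simp add: kac_eigenvector_def coeff_mult_0 coeff_0_power)
  show "kac_eigenvector m z r \<in> carrier_vec m" by (simp add: kac_eigenvector_def)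
qed

definition kac_null_vector :: "nat \<Rightarrow> 'a::field \<Rightarrow> 'a vec" where
  "kac_null_vector m y = vec m (coeff ([:1, 0, -y:] ^ (m div 2)))"

lemma kac_matrix_null_vector:
  fixes y :: "'a::field"
  assumes m: "odd m"
  shows "kac_matrix m y *\<^sub>v kac_null_vector m y = 0 \<cdot>\<^sub>v kac_null_vector m y"
    and "kac_null_vector m y $ 0 = 1"
    and "kac_null_vector m y \<in> carrier_vec m"
    and "\<And>k. k < m \<Longrightarrow> odd k \<Longrightarrow> kac_null_vector m y $ k = 0"
proof -
  define p where "p = [:1, 0, -y:]"
  define h where "h = m div 2"
  have "degree (p ^ h) \<le> degree p * h" by (rule degree_power_le)
  also have "degree p \<le> 2" by (simp add: p_def)
  then have "degree p * h \<le> 2 * h" by simp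
  finally have deg: "degree (p ^ h) < m" using m unfolding h_def by presburger
  have "of_nat (m - 1) = (2::'a) * of_nat h"
    using m unfolding h_def by (metis odd_two_times_div_two_nat of_nat_mult of_nat_numeral)
  then have ode: "[:1, 0, -y:] * pderiv (p ^ h) = [:0, - of_nat (m - 1) * y:] * p ^ h"
    unfolding p_def[symmetric] mult_pderiv_power by (simp add: p_def pderiv_pCons algebra_simps)
  from kac_matrix_eigenvector_poly[OF deg ode]
  show "kac_matrix m y *\<^sub>v kac_null_vector m y = 0 \<cdot>\<^sub>v kac_null_vector m y"
    by (simp add: kac_null_vector_def p_def h_def)
  show "kac_null_vector m y $ 0 = 1"
    using m by (simp add: kac_null_vector_def coeff_0_power odd_pos)
  show "kac_null_vector m y \<in> carrier_vec m" by (simp add: kac_null_vector_def)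
  show "\<And>k. k < m \<Longrightarrow> odd k \<Longrightarrow> kac_null_vector m y $ k = 0"
    using coeff_even_power_odd[of _ "-y"] by (simp add: kac_null_vector_def)
qed

lemma kac2_mat_eq_kronecker:
  "kac2_mat n1 n2 x y = kronecker_mat (1\<^sub>m n1) (kac_matrix n2 y) + kronecker_mat (kac_matrix n1 x) (1\<^sub>m n2)"
  by (simp add: kac2_mat_def kron_eq_kronecker_mat kac_mat_eq_kac_matrix)

lemma kac2_mat_carrier: "kac2_mat n1 n2 x y \<in> carrier_mat (n1 * n2) (n1 * n2)"
  unfolding kac2_mat_eq_kronecker by (intro add_carrier_mat kronecker_mat_carrier) auto

lemma of_real_kac2_mat:
  "map_mat complex_of_real (kac2_mat n1 n2 x y)
     = kronecker_mat (1\<^sub>m n1) (kac_matrix n2 (complex_of_real y))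
       + kronecker_mat (kac_matrix n1 (complex_of_real x)) (1\<^sub>m n2)"
proof -
  have "kronecker_mat (1\<^sub>m n1) (kac_matrix n2 y) \<in> carrier_mat (n1 * n2) (n1 * n2)"
    and "kronecker_mat (kac_matrix n1 x) (1\<^sub>m n2) \<in> carrier_mat (n1 * n2) (n1 * n2)"
    by (auto intro: kronecker_mat_carrier)
  note add = of_real_add_mat[OF this]
  show ?thesis
    unfolding kac2_mat_eq_kronecker add of_real_kronecker_mat of_real_kac_matrix of_real_hom.mat_hom_one ..
qed

lemma e1Q_eq_row_block_jordan:
  "e1Q n1 n2 x y k = row (block_jordan (n1 * n2) (kac2_mat n1 n2 x y) ^\<^sub>m k) 0"
  by (simp add: e1Q_def Qmat_def block_jordan_def)

lemma e1Q_carrier: "e1Q n1 n2 x y k \<in> carrier_vec (2 * (n1 * n2))"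
  unfolding e1Q_eq_row_block_jordan
  using pow_carrier_mat[OF block_jordan_carrier[OF kac2_mat_carrier]] by (metis carrier_matD(2) row_carrier)

definition kac_weight :: "nat \<Rightarrow> nat \<Rightarrow> int" where
  "kac_weight n r = int n - 1 - 2 * int r"

lemma kac_weight_in_Nset: "r < n \<Longrightarrow> kac_weight n r \<in> Nset n"
  unfolding kac_weight_def Nset_def by auto

lemma kac_weight_reflect: "r < n \<Longrightarrow> kac_weight n (n - 1 - r) = - kac_weight n r"
  unfolding kac_weight_def by auto

lemma kac_weight_eq_iff: "kac_weight n r = kac_weight n r' \<longleftrightarrow> r = r'"
  unfolding kac_weight_def by auto

lemma kac_weight_eq_0_iff: "kac_weight n r = 0 \<longleftrightarrow> n = 2 * r + 1"
  unfolding kac_weight_def by auto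

definition kac2_eigenvalue :: "nat \<Rightarrow> nat \<Rightarrow> complex \<Rightarrow> complex \<Rightarrow> nat \<times> nat \<Rightarrow> complex" where
  "kac2_eigenvalue n1 n2 z1 z2 r =
     of_int (kac_weight n1 (fst r)) * z1 + of_int (kac_weight n2 (snd r)) * z2"

lemma kac2_eigenvalue_visible:
  fixes \<tau>1 \<tau>2 :: real
  assumes r1: "r1 < n1" and r2: "r2 < n2"
  defines "z1 \<equiv> csqrt (complex_of_real \<tau>1)" and "z2 \<equiv> csqrt (complex_of_real \<tau>2)"
  shows "e1_visible_eigenvalue (kac2_mat n1 n2 \<tau>1 \<tau>2) (kac2_eigenvalue n1 n2 z1 z2 (r1, r2))"
proof -
  have z1: "complex_of_real \<tau>1 = z1 * z1" and z2: "complex_of_real \<tau>2 = z2 * z2"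
    unfolding z1_def z2_def by (metis power2_csqrt power2_eq_square)+
  define u where "u = kronecker_vec (kac_eigenvector n1 z1 r1) (kac_eigenvector n2 z2 r2)"
  have "map_mat complex_of_real (kac2_mat n1 n2 \<tau>1 \<tau>2) *\<^sub>v u
      = (z1 * (of_nat (n1 - 1 - r1) - of_nat r1) + z2 * (of_nat (n2 - 1 - r2) - of_nat r2)) \<cdot>\<^sub>v u"
    unfolding of_real_kac2_mat z1 z2 u_def
    by (rule kronecker_sum_eigenvector[OF kac_matrix_carrier kac_matrix_carrier
          kac_matrix_eigenvector(3)[OF r1] kac_matrix_eigenvector(3)[OF r2]
          kac_matrix_eigenvector(1)[OF r1] kac_matrix_eigenvector(1)[OF r2]])
  also have "z1 * (of_nat (n1 - 1 - r1) - of_nat r1) + z2 * (of_nat (n2 - 1 - r2) - of_nat r2)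
      = kac2_eigenvalue n1 n2 z1 z2 (r1, r2)"
    using r1 r2 by (simp add: kac2_eigenvalue_def kac_weight_def mult.commute)
  finally have "map_mat complex_of_real (kac2_mat n1 n2 \<tau>1 \<tau>2) *\<^sub>v u
      = kac2_eigenvalue n1 n2 z1 z2 (r1, r2) \<cdot>\<^sub>v u" .
  moreover have "u \<in> carrier_vec (dim_row (kac2_mat n1 n2 \<tau>1 \<tau>2))"
    using kac2_mat_carrier[of n1 n2 \<tau>1 \<tau>2] by (simp add: u_def kronecker_vec_def kac_eigenvector_def)
  moreover have "u $ 0 = 1"
    using r1 r2 kac_matrix_eigenvector(2,3)[OF r1, of z1] kac_matrix_eigenvector(2,3)[OF r2, of z2]
    by (simp add: u_def kronecker_vec_def)
  ultimately show ?thesis unfolding e1_visible_eigenvalue_def by auto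
qed

lemma kac2_eigenvalue_inj:
  assumes "indep_pair n1 n2 z1 z2"
  shows "inj_on (kac2_eigenvalue n1 n2 z1 z2) ({..<n1} \<times> {..<n2})"
proof (rule inj_onI)
  fix p q assume p: "p \<in> {..<n1} \<times> {..<n2}" and q: "q \<in> {..<n1} \<times> {..<n2}"
    and eq: "kac2_eigenvalue n1 n2 z1 z2 p = kac2_eigenvalue n1 n2 z1 z2 q"
  have "of_int (kac_weight n1 (fst p) - kac_weight n1 (fst q)) * z1
      + of_int (kac_weight n2 (snd p) - kac_weight n2 (snd q)) * z2 = 0"
    using eq by (simp add: kac2_eigenvalue_def algebra_simps)
  moreover have "kac_weight n1 (fst p) \<in> Nset n1" "kac_weight n1 (fst q) \<in> Nset n1"
    "kac_weight n2 (snd p) \<in> Nset n2" "kac_weight n2 (snd q) \<in> Nset n2"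
    using p q by (auto intro: kac_weight_in_Nset)
  ultimately have "kac_weight n1 (fst p) = kac_weight n1 (fst q)
      \<and> kac_weight n2 (snd p) = kac_weight n2 (snd q)"
    using assms unfolding indep_pair_def by blast
  then show "p = q" by (simp add: kac_weight_eq_iff prod_eq_iff)
qed

lemma kac2_eigenvalue_eq_0:
  assumes indep: "indep_pair n1 n2 z1 z2" and r: "r1 < n1" "r2 < n2"
    and zero: "kac2_eigenvalue n1 n2 z1 z2 (r1, r2) = 0"
  shows "kac_weight n1 r1 = 0 \<and> kac_weight n2 r2 = 0"
proof -
  \<comment> \<open>The reflected index carries the negated eigenvalue, so injectivity applies.\<close>
  have "kac2_eigenvalue n1 n2 z1 z2 (n1 - 1 - r1, n2 - 1 - r2) = kac2_eigenvalue n1 n2 z1 z2 (r1, r2)"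
    using zero unfolding kac2_eigenvalue_def fst_conv snd_conv kac_weight_reflect[OF r(1)]
      kac_weight_reflect[OF r(2)] by (simp add: algebra_simps neg_eq_iff_add_eq_0)
  then have "(n1 - 1 - r1, n2 - 1 - r2) = (r1, r2)"
    using kac2_eigenvalue_inj[OF indep] r by (auto dest: inj_onD)
  then have "n1 = 2 * r1 + 1" "n2 = 2 * r2 + 1" using r by auto
  then show ?thesis by (simp add: kac_weight_def)
qed

lemma kac2_rows_lin_indep:
  assumes indep: "indep_pair n1 n2 (csqrt (complex_of_real \<tau>1)) (csqrt (complex_of_real \<tau>2))"
    and n: "0 < n1" "0 < n2" and P: "P \<subseteq> {..<n1} \<times> {..<n2}"
    and off_center: "\<And>r1 r2. (r1, r2) \<in> P \<Longrightarrow> kac_weight n1 r1 \<noteq> 0 \<or> kac_weight n2 r2 \<noteq> 0"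
    and I: "I \<subseteq> {m..<m + 2 * card P}"
  shows "inj_on (e1Q n1 n2 \<tau>1 \<tau>2) I"
    and "\<not> lin_dep_vecs (2 * (n1 * n2)) (e1Q n1 n2 \<tau>1 \<tau>2 ` I)"
proof -
  let ?ev = "kac2_eigenvalue n1 n2 (csqrt (complex_of_real \<tau>1)) (csqrt (complex_of_real \<tau>2))"
  have fin: "finite (?ev ` P)" using P finite_subset by blast
  have "card (?ev ` P) = card P"
    using card_image[OF inj_on_subset[OF kac2_eigenvalue_inj[OF indep] P]] .
  then have I': "I \<subseteq> {m..<m + 2 * card (?ev ` P)}" using I by simp
  have zero: "0 \<notin> ?ev ` P"
  proof
    assume "0 \<in> ?ev ` P"
    then obtain r1 r2 where r: "(r1, r2) \<in> P" and "?ev (r1, r2) = 0" by auto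
    moreover have "r1 < n1" "r2 < n2" using r P by auto
    ultimately show False using kac2_eigenvalue_eq_0[OF indep] off_center by blast
  qed
  have visible: "e1_visible_eigenvalue (kac2_mat n1 n2 \<tau>1 \<tau>2) \<mu>" if "\<mu> \<in> ?ev ` P" for \<mu>
  proof -
    from that obtain r1 r2 where r: "(r1, r2) \<in> P" and \<mu>: "\<mu> = ?ev (r1, r2)" by auto
    have "r1 < n1" "r2 < n2" using r P by auto
    then show ?thesis unfolding \<mu> by (rule kac2_eigenvalue_visible)
  qed
  have rows: "e1Q n1 n2 \<tau>1 \<tau>2 = (\<lambda>k. row (block_jordan (n1 * n2) (kac2_mat n1 n2 \<tau>1 \<tau>2) ^\<^sub>m k) 0)"
    by (simp add: fun_eq_iff e1Q_eq_row_block_jordan)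
  have N: "0 < n1 * n2" using n by simp
  show "inj_on (e1Q n1 n2 \<tau>1 \<tau>2) I"
    unfolding rows using visible
    by (rule block_jordan_rows_lin_indep(1)[OF kac2_mat_carrier N fin zero _ I'])
  show "\<not> lin_dep_vecs (2 * (n1 * n2)) (e1Q n1 n2 \<tau>1 \<tau>2 ` I)"
    unfolding rows using visible
    by (rule block_jordan_rows_lin_indep(2)[OF kac2_mat_carrier N fin zero _ I'])
qed

lemma e1Q_inj:
  assumes indep: "indep_pair n1 n2 (csqrt (complex_of_real \<tau>1)) (csqrt (complex_of_real \<tau>2))"
    and n1: "1 < n1" and n2: "0 < n2"
  shows "inj (e1Q n1 n2 \<tau>1 \<tau>2)"
proof -
  let ?\<mu> = "kac2_eigenvalue n1 n2 (csqrt (complex_of_real \<tau>1)) (csqrt (complex_of_real \<tau>2)) (0, 0)"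
  have "?\<mu> \<noteq> 0"
    using kac2_eigenvalue_eq_0[OF indep, of 0 0] n1 n2 by (auto simp: kac_weight_eq_0_iff)
  moreover have "e1_visible_eigenvalue (kac2_mat n1 n2 \<tau>1 \<tau>2) ?\<mu>"
    using n1 n2 by (intro kac2_eigenvalue_visible) auto
  ultimately have "inj (\<lambda>k. row (block_jordan (n1 * n2) (kac2_mat n1 n2 \<tau>1 \<tau>2) ^\<^sub>m k) 0)"
    using n1 n2 by (intro block_jordan_rows_inj[OF kac2_mat_carrier]) auto
  then show ?thesis by (simp add: e1Q_eq_row_block_jordan[abs_def])
qed

definition kac2_null_vector :: "nat \<Rightarrow> nat \<Rightarrow> real \<Rightarrow> real \<Rightarrow> real vec" where
  "kac2_null_vector n1 n2 x y = kronecker_vec (kac_null_vector n1 x) (kac_null_vector n2 y)"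

lemma kac2_mat_null_vector:
  assumes n1: "odd n1" and n2: "odd n2"
  shows "kac2_mat n1 n2 x y *\<^sub>v kac2_null_vector n1 n2 x y = 0 \<cdot>\<^sub>v kac2_null_vector n1 n2 x y"
    and "kac2_null_vector n1 n2 x y \<in> carrier_vec (n1 * n2)"
    and "kac2_null_vector n1 n2 x y $ 0 = 1"
    and "\<And>j. j < n1 * n2 \<Longrightarrow> odd j \<Longrightarrow> kac2_null_vector n1 n2 x y $ j = 0"
proof -
  note v = kac_matrix_null_vector[OF n1, where y = x] and w = kac_matrix_null_vector[OF n2, where y = y]
  show "kac2_mat n1 n2 x y *\<^sub>v kac2_null_vector n1 n2 x y = 0 \<cdot>\<^sub>v kac2_null_vector n1 n2 x y"
    using kronecker_sum_eigenvector[OF kac_matrix_carrier kac_matrix_carrier v(3) w(3) v(1) w(1)]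
    by (simp add: kac2_null_vector_def kac2_mat_eq_kronecker)
  show "kac2_null_vector n1 n2 x y \<in> carrier_vec (n1 * n2)"
    using v(3) w(3) by (simp add: kac2_null_vector_def kronecker_vec_def)
  show "kac2_null_vector n1 n2 x y $ 0 = 1"
    using v(2,3) w(2,3) n1 n2 by (simp add: kac2_null_vector_def kronecker_vec_def odd_pos)
  fix j assume j: "j < n1 * n2" and "odd j"
  moreover have "j = n2 * (j div n2) + j mod n2" by simp
  ultimately have "odd (j div n2) \<or> odd (j mod n2)" using n2 by (metis even_add even_mult_iff)
  then show "kac2_null_vector n1 n2 x y $ j = 0"
    using j less_mult_imp_div_mod_less[OF j] v(3,4) w(3,4)
    by (auto simp: kac2_null_vector_def kronecker_vec_def)
qed

lemma e1Q_scalar_prod_kac2_null_vector: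
  fixes x y :: real
  assumes n1: "odd n1" and n2: "odd n2"
  defines "v \<equiv> kac2_null_vector n1 n2 x y" and "N \<equiv> n1 * n2"
  shows "1 \<le> k \<Longrightarrow> e1Q n1 n2 x y k \<bullet> (v @\<^sub>v 0\<^sub>v N) = 0"
    and "2 \<le> k \<Longrightarrow> e1Q n1 n2 x y k \<bullet> (0\<^sub>v N @\<^sub>v v) = 0"
proof -
  have N: "0 < N" using n1 n2 by (simp add: N_def odd_pos)
  note null = kac2_mat_null_vector[OF n1 n2, where x = x and y = y, folded v_def N_def]
  note pairing = row_block_jordan_power_scalar_prod[OF kac2_mat_carrier[of n1 n2 x y, folded N_def]
      null(2) null(1) N, folded e1Q_eq_row_block_jordan[of n1 n2 x y, folded N_def]]
  show "1 \<le> k \<Longrightarrow> e1Q n1 n2 x y k \<bullet> (v @\<^sub>v 0\<^sub>v N) = 0"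
    using pairing(1)[of k] by simp
  show "2 \<le> k \<Longrightarrow> e1Q n1 n2 x y k \<bullet> (0\<^sub>v N @\<^sub>v v) = 0"
    using pairing(2)[of k] by simp
qed

lemma kac2_null_vector_blocks:
  fixes x y :: real
  assumes n1: "odd n1" and n2: "odd n2"
  defines "v \<equiv> kac2_null_vector n1 n2 x y" and "N \<equiv> n1 * n2"
  shows "(v @\<^sub>v 0\<^sub>v N) \<bullet> (0\<^sub>v N @\<^sub>v v) = 0" and "(0\<^sub>v N @\<^sub>v v) \<bullet> (v @\<^sub>v 0\<^sub>v N) = 0"
    and "(v @\<^sub>v 0\<^sub>v N) \<bullet> (v @\<^sub>v 0\<^sub>v N) \<noteq> 0" and "(0\<^sub>v N @\<^sub>v v) \<bullet> (0\<^sub>v N @\<^sub>v v) \<noteq> 0"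
    and "v @\<^sub>v 0\<^sub>v N \<noteq> 0\<^sub>v N @\<^sub>v v"
proof -
  note v = kac2_mat_null_vector[OF n1 n2, where x = x and y = y, folded v_def N_def]
  have N: "0 < N" using n1 n2 by (simp add: N_def odd_pos)
  show "(v @\<^sub>v 0\<^sub>v N) \<bullet> (0\<^sub>v N @\<^sub>v v) = 0" and "(0\<^sub>v N @\<^sub>v v) \<bullet> (v @\<^sub>v 0\<^sub>v N) = 0"
    using v(2) by (simp_all add: scalar_prod_append[of _ N _ N])
  have "v \<bullet> v \<noteq> 0" using v(2,3) N by (intro real_scalar_prod_self_nonzero[of 0]) auto
  then show "(v @\<^sub>v 0\<^sub>v N) \<bullet> (v @\<^sub>v 0\<^sub>v N) \<noteq> 0" and "(0\<^sub>v N @\<^sub>v v) \<bullet> (0\<^sub>v N @\<^sub>v v) \<noteq> 0"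
    using v(2) by (simp_all add: scalar_prod_append[of _ N _ N])
  have "(v @\<^sub>v 0\<^sub>v N) $ 0 \<noteq> (0\<^sub>v N @\<^sub>v v) $ 0" using v(2,3) N by auto
  then show "v @\<^sub>v 0\<^sub>v N \<noteq> 0\<^sub>v N @\<^sub>v v" by metis
qed

lemma kac2_null_vector_blocks_nonzero_entry:
  fixes x y :: real
  assumes n1: "odd n1" and n2: "odd n2"
  defines "v \<equiv> kac2_null_vector n1 n2 x y" and "N \<equiv> n1 * n2"
  assumes j: "j < 2 * N"
  shows "(v @\<^sub>v 0\<^sub>v N) $ j \<noteq> 0 \<Longrightarrow> j < N \<and> even j"
    and "(0\<^sub>v N @\<^sub>v v) $ j \<noteq> 0 \<Longrightarrow> N \<le> j \<and> even (j - N)"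
proof -
  note v = kac2_mat_null_vector[OF n1 n2, where x = x and y = y, folded v_def N_def]
  show "(v @\<^sub>v 0\<^sub>v N) $ j \<noteq> 0 \<Longrightarrow> j < N \<and> even j"
    using j v(2,4) by (cases "j < N") (auto simp: mult_2)
  show "(0\<^sub>v N @\<^sub>v v) $ j \<noteq> 0 \<Longrightarrow> N \<le> j \<and> even (j - N)"
  proof (cases "j < N")
    case False
    then have "j - N < N" using j by linarith
    then show "(0\<^sub>v N @\<^sub>v v) $ j \<noteq> 0 \<Longrightarrow> N \<le> j \<and> even (j - N)"
      using False j v(2) v(4)[of "j - N"] by (auto simp: mult_2)
  qed (use j v(2) in \<open>auto simp: mult_2\<close>)
qed

lemma kac2_even_rows_lin_indep:
  assumes indep: "indep_pair n1 n2 (csqrt (complex_of_real \<tau>1)) (csqrt (complex_of_real \<tau>2))"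
    and n: "0 < n1" "0 < n2" and even: "even (n1 * n2)"
  shows "lin_indep_family (2 * (n1 * n2)) (map (e1Q n1 n2 \<tau>1 \<tau>2) [s ..< s + 2 * (n1 * n2)])"
proof -
  have off_center: "kac_weight n1 r1 \<noteq> 0 \<or> kac_weight n2 r2 \<noteq> 0" for r1 r2
    using even by (auto simp: kac_weight_eq_0_iff)
  have "{s..<s + 2 * (n1 * n2)} \<subseteq> {s..<s + 2 * card ({..<n1} \<times> {..<n2})}"
    by (simp add: card_cartesian_product)
  note indep_rows = kac2_rows_lin_indep[OF indep n subset_refl off_center this]
  then show ?thesis by (simp add: lin_indep_family_def distinct_map)
qed

lemma kac2_odd_rows_lin_indep:
  assumes indep: "indep_pair n1 n2 (csqrt (complex_of_real \<tau>1)) (csqrt (complex_of_real \<tau>2))"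
    and odd: "odd (n1 * n2)"
  shows "\<not> lin_dep_vecs (2 * (n1 * n2)) (e1Q n1 n2 \<tau>1 \<tau>2 ` {2..<2 * (n1 * n2)})"
proof -
  let ?P = "{..<n1} \<times> {..<n2} - {(n1 div 2, n2 div 2)}"
  have n1: "odd n1" and n2: "odd n2" using odd by auto
  have off_center: "kac_weight n1 r1 \<noteq> 0 \<or> kac_weight n2 r2 \<noteq> 0" if "(r1, r2) \<in> ?P" for r1 r2
    using that n1 n2 by (auto simp: kac_weight_eq_0_iff)
  have "(n1 div 2, n2 div 2) \<in> {..<n1} \<times> {..<n2}" using n1 n2 by (auto simp: odd_pos)
  then have "card ?P = n1 * n2 - 1" by (simp add: card_cartesian_product)
  moreover have "0 < n1 * n2" using n1 n2 by (simp add: odd_pos)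
  ultimately have "{2..<2 * (n1 * n2)} \<subseteq> {2..<2 + 2 * card ?P}" by auto
  from kac2_rows_lin_indep(2)[OF indep _ _ _ off_center this] n1 n2
  show ?thesis by (auto simp: odd_pos)
qed

lemma kac2_odd_rows_lin_dep:
  assumes indep: "indep_pair n1 n2 (csqrt (complex_of_real \<tau>1)) (csqrt (complex_of_real \<tau>2))"
    and n1: "1 < n1" and odd: "odd (n1 * n2)" and s: "2 * (n1 * n2) \<le> s"
  shows "lin_dep_vecs (2 * (n1 * n2)) (e1Q n1 n2 \<tau>1 \<tau>2 ` {2..<2 * (n1 * n2)} \<union> {e1Q n1 n2 \<tau>1 \<tau>2 s})"
proof -
  define N where "N = n1 * n2"
  interpret vec_space "TYPE(real)" "2 * N" .
  have odd_n: "odd n1" "odd n2" using odd by auto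
  then have N: "0 < N" by (simp add: N_def odd_pos)
  let ?f = "e1Q n1 n2 \<tau>1 \<tau>2" and ?v = "kac2_null_vector n1 n2 \<tau>1 \<tau>2"
  let ?S = "?f ` insert s {2..<2 * N}" and ?W = "{?v @\<^sub>v 0\<^sub>v N, 0\<^sub>v N @\<^sub>v ?v}"
  note v = kac2_mat_null_vector[OF odd_n, where x = \<tau>1 and y = \<tau>2, folded N_def]
  note orth = e1Q_scalar_prod_kac2_null_vector[OF odd_n, where x = \<tau>1 and y = \<tau>2, folded N_def]
  note W_W = kac2_null_vector_blocks[OF odd_n, where x = \<tau>1 and y = \<tau>2, folded N_def]
  have "inj ?f" using e1Q_inj[OF indep n1] odd_n by (simp add: odd_pos)
  then have "card ?S = card (insert s {2..<2 * N})"
    by (rule card_image[OF inj_on_subset[OF _ subset_UNIV]])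
  moreover have "s \<notin> {2..<2 * N}" using s by (simp add: N_def)
  ultimately have card_S: "card ?S = 2 * N - 1" using N by simp
  have "2 \<le> s" using s N unfolding N_def by linarith
  have S_W: "x \<bullet> w = 0" if "x \<in> ?S" "w \<in> ?W" for x w
  proof -
    from that(1) \<open>2 \<le> s\<close> obtain k where "2 \<le> k" "x = ?f k" by auto
    then show ?thesis using that(2) orth by auto
  qed
  have "lin_dep ?S"
  proof (rule lin_dep_if_orthogonal_to_nonisotropic[OF _ _ _ _ S_W])
    show "?S \<subseteq> carrier_vec (2 * N)" using e1Q_carrier by (auto simp: N_def)
    show "?W \<subseteq> carrier_vec (2 * N)" using v(2) by (auto simp: mult_2)
    show "w' \<bullet> w = 0" if "w \<in> ?W" "w' \<in> ?W" "w' \<noteq> w" for w w'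
      using that W_W(1,2) by auto
    show "w \<bullet> w \<noteq> 0" if "w \<in> ?W" for w
      using that W_W(3,4) by auto
    show "2 * N < card ?S + card ?W" using card_S W_W(5) N by simp
  qed simp_all
  moreover have "?S = ?f ` {2..<2 * N} \<union> {?f s}" by auto
  ultimately show ?thesis by (simp add: N_def)
qed

lemma mat_of_e1Q_rows_mult_vec_eq_0:
  assumes rs: "set rs \<subseteq> e1Q n1 n2 x y ` {2..}" and w: "w \<in> carrier_vec (2 * (n1 * n2))"
    and orth: "\<And>k. 2 \<le> k \<Longrightarrow> e1Q n1 n2 x y k \<bullet> w = 0"
  shows "mat_of_rows (2 * (n1 * n2)) rs *\<^sub>v w = 0\<^sub>v (length rs)"
proof (rule eq_vecI)
  fix i assume "i < dim_vec (0\<^sub>v (length rs) :: real vec)"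
  then have i: "i < length rs" by simp
  then have "rs ! i \<in> e1Q n1 n2 x y ` {2..}" using rs nth_mem by blast
  then obtain k where k: "2 \<le> k" "rs ! i = e1Q n1 n2 x y k" by auto
  have "row (mat_of_rows (2 * (n1 * n2)) rs) i = rs ! i"
    using i k(2) e1Q_carrier by (intro mat_of_rows_row) auto
  then show "(mat_of_rows (2 * (n1 * n2)) rs *\<^sub>v w) $ i = 0\<^sub>v (length rs) $ i"
    using i k orth by simp
qed simp

lemma e1Q_rows_columns_in_span:
  fixes rs :: "real vec list" and x y :: real
  assumes odd: "odd (n1 * n2)" and rs: "set rs \<subseteq> e1Q n1 n2 x y ` {2..}"
  defines "N \<equiv> n1 * n2" and "M \<equiv> mat_of_rows (2 * (n1 * n2)) rs"
  shows "col M 0 \<in> span_vecs (length rs) {col M (2 + 2 * t) | t. 3 + 2 * t \<le> N}"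
    and "col M N \<in> span_vecs (length rs) {col M (N + 2 + 2 * t) | t. N + 3 + 2 * t \<le> 2 * N}"
proof -
  interpret vec_space "TYPE(real)" "length rs" .
  have odd_n: "odd n1" "odd n2" using odd by auto
  then have N: "0 < N" by (simp add: N_def odd_pos)
  let ?v = "kac2_null_vector n1 n2 x y"
  note v = kac2_mat_null_vector[OF odd_n, where x = x and y = y, folded N_def]
  note orth = e1Q_scalar_prod_kac2_null_vector[OF odd_n, where x = x and y = y, folded N_def]
  note support = kac2_null_vector_blocks_nonzero_entry[OF odd_n, where x = x and y = y, folded N_def]
  have M: "M \<in> carrier_mat (length rs) (2 * N)" by (simp add: M_def N_def)
  note null = mat_of_e1Q_rows_mult_vec_eq_0[OF rs, folded M_def N_def]
  have "col M 0 \<in> span {col M j | j. j < 2 * N \<and> j \<noteq> 0 \<and> (?v @\<^sub>v 0\<^sub>v N) $ j \<noteq> 0}"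
    using v(2,3) N by (intro col_in_span_if_mult_vec_zero[OF M _ null]) (auto simp: mult_2 orth)
  moreover have "{col M j | j. j < 2 * N \<and> j \<noteq> 0 \<and> (?v @\<^sub>v 0\<^sub>v N) $ j \<noteq> 0}
      \<subseteq> {col M (2 + 2 * t) | t. 3 + 2 * t \<le> N}"
  proof
    fix c assume "c \<in> {col M j | j. j < 2 * N \<and> j \<noteq> 0 \<and> (?v @\<^sub>v 0\<^sub>v N) $ j \<noteq> 0}"
    then obtain j where c: "c = col M j" and j: "j < 2 * N" "j \<noteq> 0" "(?v @\<^sub>v 0\<^sub>v N) $ j \<noteq> 0"
      by blast
    have "\<exists>t. j = 2 + 2 * t \<and> 3 + 2 * t \<le> N" using support(1)[OF j(1,3)] j(2) by presburger
    then show "c \<in> {col M (2 + 2 * t) | t. 3 + 2 * t \<le> N}" unfolding c by blast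
  qed
  ultimately show "col M 0 \<in> span_vecs (length rs) {col M (2 + 2 * t) | t. 3 + 2 * t \<le> N}"
    using span_is_monotone by blast
  have "col M N \<in> span {col M j | j. j < 2 * N \<and> j \<noteq> N \<and> (0\<^sub>v N @\<^sub>v ?v) $ j \<noteq> 0}"
    using v(2,3) N by (intro col_in_span_if_mult_vec_zero[OF M _ null]) (auto simp: mult_2 orth)
  moreover have "{col M j | j. j < 2 * N \<and> j \<noteq> N \<and> (0\<^sub>v N @\<^sub>v ?v) $ j \<noteq> 0}
      \<subseteq> {col M (N + 2 + 2 * t) | t. N + 3 + 2 * t \<le> 2 * N}"
  proof
    fix c assume "c \<in> {col M j | j. j < 2 * N \<and> j \<noteq> N \<and> (0\<^sub>v N @\<^sub>v ?v) $ j \<noteq> 0}"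
    then obtain j where c: "c = col M j" and j: "j < 2 * N" "j \<noteq> N" "(0\<^sub>v N @\<^sub>v ?v) $ j \<noteq> 0"
      by blast
    have "\<exists>t. j = N + 2 + 2 * t \<and> N + 3 + 2 * t \<le> 2 * N"
      using support(2)[OF j(1,3)] j(1,2) by presburger
    then show "c \<in> {col M (N + 2 + 2 * t) | t. N + 3 + 2 * t \<le> 2 * N}" unfolding c by blast
  qed
  ultimately show "col M N \<in> span_vecs (length rs) {col M (N + 2 + 2 * t) | t. N + 3 + 2 * t \<le> 2 * N}"
    using span_is_monotone by blast
qed

lemma kac2_odd_row_matrix_columns:
  fixes x y :: real
  assumes odd: "odd (n1 * n2)" and s: "2 * (n1 * n2) \<le> s"
  defines "M \<equiv> mat_of_rows (2 * (n1 * n2))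
                 (map (e1Q n1 n2 x y) [2..<2 * (n1 * n2)] @ [e1Q n1 n2 x y s])"
  shows "col M 0 \<in> span_vecs (2 * (n1 * n2) - 1) {col M (2 + 2 * t) | t. 3 + 2 * t \<le> n1 * n2}"
    and "col M (n1 * n2) \<in> span_vecs (2 * (n1 * n2) - 1)
           {col M (n1 * n2 + 2 + 2 * t) | t. n1 * n2 + 3 + 2 * t \<le> 2 * (n1 * n2)}"
proof -
  define rs where "rs = map (e1Q n1 n2 x y) [2..<2 * (n1 * n2)] @ [e1Q n1 n2 x y s]"
  have N: "0 < n1 * n2" using odd by (simp add: odd_pos)
  then have "2 \<le> s" using s by linarith
  then have "set rs \<subseteq> e1Q n1 n2 x y ` {2..}" by (auto simp: rs_def)
  note columns = e1Q_rows_columns_in_span[OF odd this, folded M_def[folded rs_def]]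
  have "length rs = Suc (2 * (n1 * n2) - 2)" by (simp add: rs_def)
  then have "length rs = 2 * (n1 * n2) - 1" using N by linarith
  with columns show
    "col M 0 \<in> span_vecs (2 * (n1 * n2) - 1) {col M (2 + 2 * t) | t. 3 + 2 * t \<le> n1 * n2}"
    and "col M (n1 * n2) \<in> span_vecs (2 * (n1 * n2) - 1)
           {col M (n1 * n2 + 2 + 2 * t) | t. n1 * n2 + 3 + 2 * t \<le> 2 * (n1 * n2)}"
    by simp_all
qed

theorem lemma5:
  fixes n1 n2 :: nat and \<tau>1 \<tau>2 :: real
  assumes "n1 \<ge> 2" and "n2 \<ge> 2"
    and "\<tau>1 \<noteq> \<tau>2"
    and "indep_pair n1 n2 (csqrt (complex_of_real \<tau>1)) (csqrt (complex_of_real \<tau>2))"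
  shows "(even (n1 * n2) \<longrightarrow>
           (\<forall>s::nat. s \<ge> 1 \<longrightarrow>
              lin_indep_family (2 * (n1 * n2))
                (map (e1Q n1 n2 \<tau>1 \<tau>2) [s ..< s + 2 * (n1 * n2)])))
       \<and> (odd (n1 * n2) \<longrightarrow>
           (\<forall>s::nat. s \<ge> 2 * (n1 * n2) \<longrightarrow>
              (let N = n1 * n2;
                   \<Lambda> = e1Q n1 n2 \<tau>1 \<tau>2 ` {2 ..< 2 * N};
                   M = mat_of_rows (2 * N) (map (e1Q n1 n2 \<tau>1 \<tau>2) [2 ..< 2 * N] @ [e1Q n1 n2 \<tau>1 \<tau>2 s]);
                   C = (\<lambda>k. col M (k - 1))
               in \<not> lin_dep_vecs (2 * N) \<Lambda>
                  \<and> lin_dep_vecs (2 * N) (\<Lambda> \<union> {e1Q n1 n2 \<tau>1 \<tau>2 s})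
                  \<and> C 1 \<in> span_vecs (2 * N - 1) {C (3 + 2 * t) | t. 3 + 2 * t \<le> N}
                  \<and> C (N + 1) \<in> span_vecs (2 * N - 1) {C (N + 3 + 2 * t) | t. N + 3 + 2 * t \<le> 2 * N})))"
proof -
  have n: "0 < n1" "0 < n2" "1 < n1" using assms(1,2) by auto
  show ?thesis
    using kac2_even_rows_lin_indep[OF assms(4) n(1,2)] kac2_odd_rows_lin_indep[OF assms(4)]
      kac2_odd_rows_lin_dep[OF assms(4) n(3)] kac2_odd_row_matrix_columns
    by (simp add: Let_def)
qed

end
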